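(* If a Banach space $X$ has a seminormalized (Schauder) basis $(e_n)$ which dominates each of its subsequences (i.e., for every increasing sequence $(k_n)$ of positive integers, $(e_n)$ dominates $(e_{k_n})$), then $\mathcal{L}(X)$ is non-separable.
   Context: $\mathcal{L}(X)$ is the space of all bounded linear operators on $X$ with the operator norm. A sequence $(e_n)$ is seminormalized if $0<\inf_n\|e_n\|\le\sup_n\|e_n\|<\infty$. $(x_n)$ dominates $(y_n)$ if there is $C>0$ with $\|\sum a_ny_n\|\le C\|\sum a_nx_n\|$ for all finitely supported scalar sequences $(a_n)$. *)

theory Defs
  imports "HOL-Analysis.Analysis"
begin

definition schauder_basis :: "(nat \<Rightarrow> 'a::banach) \<Rightarrow> bool" where
  "schauder_basis e \<longleftrightarrow>
     (\<forall>x. \<exists>!a::nat \<Rightarrow> real. (\<lambda>N. \<Sum>n<N. a n *\<^sub>R e n) \<longlonglongrightarrow> x)"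

definition seminormalized :: "(nat \<Rightarrow> 'a::real_normed_vector) \<Rightarrow> bool" where
  "seminormalized e \<longleftrightarrow> (\<exists>c>0. \<forall>n. c \<le> norm (e n)) \<and> (\<exists>M. \<forall>n. norm (e n) \<le> M)"

definition dominates :: "(nat \<Rightarrow> 'a::real_normed_vector) \<Rightarrow> (nat \<Rightarrow> 'a) \<Rightarrow> bool" where
  "dominates x y \<longleftrightarrow> (\<exists>C>0. \<forall>a::nat \<Rightarrow> real. finite {n. a n \<noteq> 0} \<longrightarrow>
      norm (\<Sum>n\<in>{n. a n \<noteq> 0}. a n *\<^sub>R y n) \<le> C * norm (\<Sum>n\<in>{n. a n \<noteq> 0}. a n *\<^sub>R x n))"

end

(*
  For strictly increasing k, domination of (e (k n)) by (e n) makes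
  sum a_n e_n |-> sum a_n e_(k n) a bounded operator on X.  With k_A n = 2n + [n in A]
  for sets A of naturals, two different sets give operators sending some e_m to two
  different basis vectors; as the basis projections are uniformly bounded, distinct
  basis vectors are uniformly separated.  So L(X) contains continuum many operators at
  mutual distance bounded below.

  The uniform bound on the basis projections S_N comes from the Baire category theorem:
  some set {z. sup_N norm (S_N z) <= n} is dense in a ball, hence, being convex and
  symmetric, in a ball around 0; writing an arbitrary x as a geometrically convergent
  series of such approximants then bounds S_N x.
*)

theory Submission
  imports Defs
begin

lemma Baire_closure_contains_ball:
  fixes F :: "nat \<Rightarrow> 'a::complete_space set"
  assumes "(\<Union>n. F n) = UNIV"
  shows "\<exists>n x r. r > 0 \<and> ball x r \<subseteq> closure (F n)"
proof (rule ccontr)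
  assume no_ball: "\<not> ?thesis"
  have "euclidean interior_of (\<Union>n. closure (F n)) = ({} :: 'a set)"
  proof (rule Baire_category_alt[OF disjI1[OF completely_metrizable_space_euclidean]])
    fix T assume "T \<in> range (\<lambda>n. closure (F n))"
    then obtain n where T: "T = closure (F n)" by blast
    have "interior T = {}"
      using no_ball by (auto simp: T mem_interior)
    then show "closedin euclidean T \<and> euclidean interior_of T = {}"
      by (simp add: T)
  qed simp
  moreover have "(\<Union>n. closure (F n)) = UNIV"
    using assms closure_subset by blast
  ultimately show False by simp
qed

lemma symmetric_convex_closure_contains_ball_0:
  fixes D :: "'a::real_normed_vector set"
  assumes "convex D" and "uminus ` D \<subseteq> D" and "ball x r \<subseteq> closure D"
  shows "ball 0 r \<subseteq> closure D"
proof
  fix y :: 'a assume "y \<in> ball 0 r"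
  then have "x + y \<in> closure D" "x - y \<in> closure D"
    using assms(3) by (auto simp: dist_norm)
  have "(-1) *\<^sub>R (x - y) \<in> closure ((*\<^sub>R) (-1) ` D)"
    using \<open>x - y \<in> closure D\<close> by (simp only: flip: closure_scaleR) (rule imageI)
  moreover have "(*\<^sub>R) (-1) ` D \<subseteq> D"
    using assms(2) by auto
  ultimately have "- (x - y) \<in> closure D"
    using closure_mono by (metis scaleR_minus1_left subsetD)
  have "y = (1/2) *\<^sub>R (x + y) + (1/2) *\<^sub>R (- (x - y))"
    by (metis add.inverse_inverse add_diff_cancel_right diff_minus_eq_add
        scaleR_half_double scaleR_right_distrib uminus_add_conv_diff)
  also have "\<dots> \<in> closure D"
    using \<open>x + y \<in> closure D\<close> \<open>- (x - y) \<in> closure D\<close> assms(1)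
    by (intro convexD) auto
  finally show "y \<in> closure D" .
qed

lemma series_decomposition_from_closures:
  fixes B :: "real \<Rightarrow> 'a::real_normed_vector set"
  assumes "mono B" and approx: "\<And>y. y \<in> closure (B (norm y))" and "x \<noteq> 0"
  shows "\<exists>z. (\<lambda>J. \<Sum>j<J. z j) \<longlonglongrightarrow> x \<and> (\<forall>j. z j \<in> B (norm x / 2 ^ j))"
proof -
  have "\<exists>r. \<forall>j. ((j = 0 \<longrightarrow> r j = x) \<and> norm (r j) \<le> norm x / 2 ^ j)
              \<and> r j - r (Suc j) \<in> B (norm x / 2 ^ j)"
  proof (rule dependent_nat_choice)
    fix \<rho> j assume \<rho>: "(j = 0 \<longrightarrow> \<rho> = x) \<and> norm \<rho> \<le> norm x / 2 ^ j"
    have "norm x / 2 ^ Suc j > 0" using \<open>x \<noteq> 0\<close> by simp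
    then obtain w where w: "w \<in> B (norm \<rho>)" "dist w \<rho> < norm x / 2 ^ Suc j"
      using approx[of \<rho>] unfolding closure_approachable by blast
    have "B (norm \<rho>) \<subseteq> B (norm x / 2 ^ j)"
      using \<rho> by (intro monoD[OF \<open>mono B\<close>]) simp
    moreover have "norm (\<rho> - w) \<le> norm x / 2 ^ Suc j"
      using w(2) by (simp add: dist_norm norm_minus_commute)
    ultimately show "\<exists>\<rho>'. ((Suc j = 0 \<longrightarrow> \<rho>' = x) \<and> norm \<rho>' \<le> norm x / 2 ^ Suc j)
                      \<and> \<rho> - \<rho>' \<in> B (norm x / 2 ^ j)"
      using w(1) by (intro exI[of _ "\<rho> - w"]) auto
  qed auto
  then obtain r where r0: "r 0 = x" and r_le: "\<And>j. norm (r j) \<le> norm x / 2 ^ j"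
    and r_diff: "\<And>j. r j - r (Suc j) \<in> B (norm x / 2 ^ j)" by blast
  have "r \<longlonglongrightarrow> 0"
  proof (rule Lim_null_comparison)
    show "\<forall>\<^sub>F j in sequentially. norm (r j) \<le> norm x / 2 ^ j"
      using r_le by simp
    show "(\<lambda>j. norm x / 2 ^ j) \<longlonglongrightarrow> 0"
      by (rule LIMSEQ_divide_realpow_zero) simp
  qed
  then have "(\<lambda>J. r 0 - r J) \<longlonglongrightarrow> x - 0"
    unfolding r0 by (intro tendsto_diff tendsto_const)
  then have "(\<lambda>J. \<Sum>j<J. r j - r (Suc j)) \<longlonglongrightarrow> x"
    by (simp add: sum_lessThan_telescope')
  with r_diff show ?thesis
    by (intro exI[of _ "\<lambda>j. r j - r (Suc j)"]) simp
qed

lemma Cauchy_dominated: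
  fixes f g :: "nat \<Rightarrow> 'a::real_normed_vector"
  assumes "Cauchy f" and dominated: "\<And>m n. norm (g m - g n) \<le> C * norm (f m - f n)" and "C > 0"
  shows "Cauchy g"
proof (rule CauchyI)
  fix \<epsilon> :: real assume "\<epsilon> > 0"
  then obtain M where M: "\<And>m n. m \<ge> M \<Longrightarrow> n \<ge> M \<Longrightarrow> norm (f m - f n) < \<epsilon> / C"
    using CauchyD[OF \<open>Cauchy f\<close>, of "\<epsilon> / C"] \<open>C > 0\<close> by auto
  have "norm (g m - g n) < \<epsilon>" if "m \<ge> M" "n \<ge> M" for m n
  proof -
    have "norm (g m - g n) \<le> C * norm (f m - f n)"
      by (rule dominated)
    also have "\<dots> < C * (\<epsilon> / C)"
      using M[OF that] \<open>C > 0\<close> by (intro mult_strict_left_mono)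
    finally show ?thesis
      using \<open>C > 0\<close> by simp
  qed
  then show "\<exists>M. \<forall>m\<ge>M. \<forall>n\<ge>M. norm (g m - g n) < \<epsilon>"
    by blast
qed

lemma sum_lessThan_indicator_scaleR [simp]:
  fixes f :: "nat \<Rightarrow> 'a::real_vector"
  shows "(\<Sum>n<N. (if n = m then c else 0) *\<^sub>R f n) = (if m < N then c *\<^sub>R f m else 0)"
  by (induction N) (auto simp: less_Suc_eq)

lemma sum_lessThan_diff:
  fixes f :: "nat \<Rightarrow> 'a::ab_group_add"
  assumes "M \<le> N"
  shows "sum f {..<N} - sum f {..<M} = sum f {M..<N}"
  using sum_diff_nat_ivl[of 0 M N f] assms by (simp add: atLeast0LessThan)

lemma dominates_finite_sums:
  assumes "dominates x y"
  obtains C where "C > 0"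
    and "\<And>A a. finite A \<Longrightarrow> norm (\<Sum>n\<in>A. a n *\<^sub>R y n) \<le> C * norm (\<Sum>n\<in>A. a n *\<^sub>R x n)"
proof -
  obtain C where "C > 0" and C: "\<And>a. finite {n. a n \<noteq> 0} \<Longrightarrow>
      norm (\<Sum>n\<in>{n. a n \<noteq> 0}. a n *\<^sub>R y n) \<le> C * norm (\<Sum>n\<in>{n. a n \<noteq> 0}. a n *\<^sub>R x n)"
    using assms unfolding dominates_def by blast
  have "norm (\<Sum>n\<in>A. a n *\<^sub>R y n) \<le> C * norm (\<Sum>n\<in>A. a n *\<^sub>R x n)" if "finite A" for A a
  proof -
    define b where "b n = (if n \<in> A then a n else 0)" for n
    have support: "{n. b n \<noteq> 0} \<subseteq> A"
      by (auto simp: b_def)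
    have "(\<Sum>n\<in>A. a n *\<^sub>R z n) = (\<Sum>n\<in>{n. b n \<noteq> 0}. b n *\<^sub>R z n)" for z :: "nat \<Rightarrow> 'a"
    proof -
      have "(\<Sum>n\<in>A. a n *\<^sub>R z n) = (\<Sum>n\<in>A. b n *\<^sub>R z n)"
        by (rule sum.cong) (simp_all add: b_def)
      also have "\<dots> = (\<Sum>n\<in>{n. b n \<noteq> 0}. b n *\<^sub>R z n)"
        by (rule sum.mono_neutral_right[OF \<open>finite A\<close> support]) simp
      finally show ?thesis .
    qed
    then show ?thesis
      using C[of b] finite_subset[OF support \<open>finite A\<close>] by simp
  qed
  with \<open>C > 0\<close> show ?thesis
    using that by blast
qed

definition set_subsequence :: "nat set \<Rightarrow> nat \<Rightarrow> nat" where
  "set_subsequence A n = 2 * n + (if n \<in> A then 1 else 0)"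

lemma strict_mono_set_subsequence: "strict_mono (set_subsequence A)"
  unfolding strict_mono_Suc_iff set_subsequence_def by simp

lemma set_subsequence_differ:
  assumes "A \<noteq> A'"
  obtains m where "set_subsequence A m \<noteq> set_subsequence A' m"
proof -
  obtain m where "(m \<in> A) \<noteq> (m \<in> A')"
    using assms by blast
  then show ?thesis
    using that[of m] by (auto simp: set_subsequence_def)
qed

locale basis_expansion =
  fixes e :: "nat \<Rightarrow> 'a::banach"
  assumes schauder: "schauder_basis e"
begin

definition coeff :: "nat \<Rightarrow> 'a \<Rightarrow> real" where
  "coeff n x = (THE a. (\<lambda>N. \<Sum>n<N. a n *\<^sub>R e n) \<longlonglongrightarrow> x) n"

definition partial_sum :: "nat \<Rightarrow> 'a \<Rightarrow> 'a" where
  "partial_sum N x = (\<Sum>n<N. coeff n x *\<^sub>R e n)"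

lemma partial_sum_tendsto: "(\<lambda>N. partial_sum N x) \<longlonglongrightarrow> x"
proof -
  have "\<exists>!a. (\<lambda>N. \<Sum>n<N. a n *\<^sub>R e n) \<longlonglongrightarrow> x"
    using schauder unfolding schauder_basis_def by blast
  from theI'[OF this] show ?thesis
    unfolding partial_sum_def coeff_def .
qed

lemma coeff_unique:
  assumes "(\<lambda>N. \<Sum>n<N. a n *\<^sub>R e n) \<longlonglongrightarrow> x"
  shows "coeff n x = a n"
proof -
  have "\<exists>!a. (\<lambda>N. \<Sum>n<N. a n *\<^sub>R e n) \<longlonglongrightarrow> x"
    using schauder unfolding schauder_basis_def by blast
  then have "(THE a. (\<lambda>N. \<Sum>n<N. a n *\<^sub>R e n) \<longlonglongrightarrow> x) = a"
    using assms by (rule the1_equality[where P = "\<lambda>a. (\<lambda>N. \<Sum>n<N. a n *\<^sub>R e n) \<longlonglongrightarrow> x"])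
  then show ?thesis
    unfolding coeff_def by simp
qed

lemma coeff_basis: "coeff m (e n) = (if m = n then 1 else 0)"
proof (rule coeff_unique)
  have "\<forall>\<^sub>F N in sequentially. (\<Sum>m<N. (if m = n then 1 else 0) *\<^sub>R e m) = e n"
    using eventually_gt_at_top[of n] by eventually_elim simp
  then show "(\<lambda>N. \<Sum>m<N. (if m = n then 1 else 0) *\<^sub>R e m) \<longlonglongrightarrow> e n"
    by (rule tendsto_eventually)
qed

lemma linear_coeff: "linear (coeff n)"
proof
  fix x y and t :: real
  have "(\<lambda>N. partial_sum N x + partial_sum N y) \<longlonglongrightarrow> x + y"
    by (intro tendsto_add partial_sum_tendsto)
  then show "coeff n (x + y) = coeff n x + coeff n y"
    by (intro coeff_unique) (simp add: partial_sum_def scaleR_add_left sum.distrib)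
  have "(\<lambda>N. t *\<^sub>R partial_sum N x) \<longlonglongrightarrow> t *\<^sub>R x"
    by (intro tendsto_scaleR tendsto_const partial_sum_tendsto)
  then show "coeff n (t *\<^sub>R x) = t *\<^sub>R coeff n x"
    by (intro coeff_unique) (simp add: partial_sum_def scaleR_sum_right)
qed

lemma basis_nonzero: "e n \<noteq> 0"
  using coeff_basis[of n n] linear_0[OF linear_coeff, of n] by auto

lemma linear_partial_sum: "linear (partial_sum N)"
  unfolding partial_sum_def
  by (intro linear_compose_sum ballI linear_compose[OF linear_coeff linear_scaleR_left, unfolded o_def])

lemma coeff_scaleR_basis: "coeff n x *\<^sub>R e n = partial_sum (Suc n) x - partial_sum n x"
  by (simp add: partial_sum_def)

lemma norm_coeff_scaleR_le:
  assumes "\<And>N. norm (partial_sum N z) \<le> c"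
  shows "\<bar>coeff n z\<bar> * norm (e n) \<le> 2 * c"
proof -
  have "\<bar>coeff n z\<bar> * norm (e n) = norm (partial_sum (Suc n) z - partial_sum n z)"
    by (simp flip: coeff_scaleR_basis)
  also have "\<dots> \<le> norm (partial_sum (Suc n) z) + norm (partial_sum n z)"
    by (rule norm_triangle_ineq4)
  also have "\<dots> \<le> 2 * c"
    using assms[of n] assms[of "Suc n"] by simp
  finally show ?thesis .
qed

text \<open>The projections \<open>partial_sum N\<close> are not yet known to be continuous here; the
  interchange of projection and series is justified by uniqueness of expansions instead.\<close>

lemma partial_sum_suminf:
  assumes sums: "(\<lambda>J. \<Sum>j<J. z j) \<longlonglongrightarrow> x"
    and bound: "\<And>N j. norm (partial_sum N (z j)) \<le> g j" and "summable g"
  shows "partial_sum N x = (\<Sum>j. partial_sum N (z j))"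
proof -
  have coeff_summable: "summable (\<lambda>j. coeff n (z j))" for n
  proof (rule summable_comparison_test)
    show "summable (\<lambda>j. 2 * g j / norm (e n))"
      using \<open>summable g\<close> by (intro summable_divide summable_mult)
    show "\<exists>J. \<forall>j\<ge>J. norm (coeff n (z j)) \<le> 2 * g j / norm (e n)"
      using norm_coeff_scaleR_le[OF bound] basis_nonzero by (simp add: field_simps)
  qed
  define a where "a n = (\<Sum>j. coeff n (z j))" for n
  have suminf_partial_sum: "(\<Sum>j. partial_sum M (z j)) = (\<Sum>n<M. a n *\<^sub>R e n)" for M
    unfolding partial_sum_def a_def
    by (simp add: suminf_sum summable_scaleR_left coeff_summable suminf_scaleR_left)
  have "(\<lambda>M. \<Sum>j. partial_sum M (z j)) \<longlonglongrightarrow> x"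
  proof (rule swap_uniform_limit'[OF _ sums])
    show "\<forall>\<^sub>F J in sequentially. ((\<lambda>M. \<Sum>j<J. partial_sum M (z j)) \<longlongrightarrow> (\<Sum>j<J. z j)) sequentially"
      by (intro always_eventually allI tendsto_sum partial_sum_tendsto)
    show "uniform_limit UNIV (\<lambda>J M. \<Sum>j<J. partial_sum M (z j)) (\<lambda>M. \<Sum>j. partial_sum M (z j)) sequentially"
      using bound \<open>summable g\<close> by (rule Weierstrass_m_test)
  qed simp_all
  then have "coeff n x = a n" for n
    by (intro coeff_unique) (simp add: suminf_partial_sum)
  then have "partial_sum N x = (\<Sum>n<N. a n *\<^sub>R e n)"
    by (simp add: partial_sum_def)
  then show ?thesis
    by (simp only: suminf_partial_sum)
qed

section \<open>Uniform boundedness of the basis projections\<close>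

definition partial_sums_bounded :: "real \<Rightarrow> 'a set" where
  "partial_sums_bounded c = {z. \<forall>N. norm (partial_sum N z) \<le> c}"

lemma mono_partial_sums_bounded: "mono partial_sums_bounded"
  by (auto simp: mono_def partial_sums_bounded_def intro: order_trans)

lemma convex_partial_sums_bounded: "convex (partial_sums_bounded c)"
proof (rule convexI)
  fix x y and u v :: real
  assume "x \<in> partial_sums_bounded c" "y \<in> partial_sums_bounded c" "0 \<le> u" "0 \<le> v" "u + v = 1"
  have "norm (partial_sum N (u *\<^sub>R x + v *\<^sub>R y)) \<le> c" for N
  proof -
    have "norm (partial_sum N (u *\<^sub>R x + v *\<^sub>R y))
        = norm (u *\<^sub>R partial_sum N x + v *\<^sub>R partial_sum N y)"
      by (simp add: linear_add[OF linear_partial_sum] linear_scale[OF linear_partial_sum])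
    also have "\<dots> \<le> u * norm (partial_sum N x) + v * norm (partial_sum N y)"
      using norm_triangle_ineq[of "u *\<^sub>R partial_sum N x" "v *\<^sub>R partial_sum N y"] \<open>0 \<le> u\<close> \<open>0 \<le> v\<close>
      by simp
    also have "\<dots> \<le> u * c + v * c"
      using \<open>x \<in> partial_sums_bounded c\<close> \<open>y \<in> partial_sums_bounded c\<close> \<open>0 \<le> u\<close> \<open>0 \<le> v\<close>
      by (intro add_mono mult_left_mono) (auto simp: partial_sums_bounded_def)
    also have "\<dots> = c"
      using \<open>u + v = 1\<close> by (simp flip: distrib_right)
    finally show ?thesis .
  qed
  then show "u *\<^sub>R x + v *\<^sub>R y \<in> partial_sums_bounded c"
    by (simp add: partial_sums_bounded_def)
qed

lemma uminus_partial_sums_bounded: "uminus ` partial_sums_bounded c \<subseteq> partial_sums_bounded c"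
  by (auto simp: partial_sums_bounded_def linear_neg[OF linear_partial_sum])

lemma scaleR_partial_sums_bounded:
  assumes "t \<ge> 0"
  shows "(*\<^sub>R) t ` partial_sums_bounded c \<subseteq> partial_sums_bounded (t * c)"
  using assms
  by (auto simp: partial_sums_bounded_def linear_scale[OF linear_partial_sum] mult_left_mono)

lemma UN_partial_sums_bounded: "(\<Union>n. partial_sums_bounded (real n)) = UNIV"
proof -
  have "x \<in> (\<Union>n. partial_sums_bounded (real n))" for x
  proof -
    have "Bseq (\<lambda>N. partial_sum N x)"
      using partial_sum_tendsto convergent_def convergent_imp_Bseq by blast
    then obtain B where "\<And>N. norm (partial_sum N x) \<le> B"
      by (auto simp: Bseq_def)
    moreover obtain n where "B \<le> real n"
      using real_arch_simple by blast
    ultimately show ?thesis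
      unfolding partial_sums_bounded_def by (auto intro: order_trans)
  qed
  then show ?thesis by blast
qed

lemma closure_partial_sums_bounded:
  obtains M where "M \<ge> 0" and "\<And>y. y \<in> closure (partial_sums_bounded (M * norm y))"
proof -
  obtain n x r where "r > 0" and "ball x r \<subseteq> closure (partial_sums_bounded (real n))"
    using Baire_closure_contains_ball[OF UN_partial_sums_bounded] by blast
  then have ball: "ball 0 r \<subseteq> closure (partial_sums_bounded (real n))"
    by (intro symmetric_convex_closure_contains_ball_0 convex_partial_sums_bounded
        uminus_partial_sums_bounded)
  have "y \<in> closure (partial_sums_bounded (2 * real n / r * norm y))" for y
  proof (cases "y = 0")
    case True
    then show ?thesis
      using closure_subset by (force simp: partial_sums_bounded_def linear_0[OF linear_partial_sum])
  next
    case False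
    define t where "t = 2 * norm y / r"
    have "t > 0"
      using False \<open>r > 0\<close> by (simp add: t_def)
    have "(1 / t) *\<^sub>R y \<in> ball 0 r"
      using False \<open>r > 0\<close> by (simp add: t_def)
    then have "t *\<^sub>R ((1 / t) *\<^sub>R y) \<in> (*\<^sub>R) t ` closure (partial_sums_bounded (real n))"
      using ball by blast
    also have "\<dots> = closure ((*\<^sub>R) t ` partial_sums_bounded (real n))"
      by (rule closure_scaleR)
    also have "\<dots> \<subseteq> closure (partial_sums_bounded (t * real n))"
      using \<open>t > 0\<close> by (intro closure_mono scaleR_partial_sums_bounded) simp
    finally have "y \<in> closure (partial_sums_bounded (t * real n))"
      using \<open>t > 0\<close> by simp
    moreover have "t * real n = 2 * real n / r * norm y"
      by (simp add: t_def)
    ultimately show ?thesis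
      by simp
  qed
  moreover have "2 * real n / r \<ge> 0"
    using \<open>r > 0\<close> by simp
  ultimately show ?thesis
    using that by blast
qed

lemma partial_sum_uniformly_bounded:
  obtains K where "K > 0" and "\<And>N x. norm (partial_sum N x) \<le> K * norm x"
proof -
  obtain M where "M \<ge> 0" and M: "\<And>y. y \<in> closure (partial_sums_bounded (M * norm y))"
    using closure_partial_sums_bounded by blast
  have bound: "norm (partial_sum N x) \<le> 2 * M * norm x" for N x
  proof (cases "x = 0")
    case True
    then show ?thesis
      by (simp add: linear_0[OF linear_partial_sum])
  next
    case False
    have "mono (\<lambda>c. partial_sums_bounded (M * c))"
      using \<open>M \<ge> 0\<close> by (intro monoI monoD[OF mono_partial_sums_bounded] mult_left_mono)
    then obtain z where sums: "(\<lambda>J. \<Sum>j<J. z j) \<longlonglongrightarrow> x"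
      and z: "\<And>j. z j \<in> partial_sums_bounded (M * (norm x / 2 ^ j))"
      using series_decomposition_from_closures[OF _ M False] by blast
    define g where "g j = M * norm x * (1 / 2) ^ j" for j
    have "(\<lambda>j. (1 / 2 :: real) ^ j) sums 2"
      using geometric_sums[of "1 / 2 :: real"] by simp
    then have g_sums: "g sums (M * norm x * 2)"
      unfolding g_def by (rule sums_mult)
    have z_bound: "norm (partial_sum N' (z j)) \<le> g j" for N' j
      using z[of j] by (simp add: partial_sums_bounded_def g_def power_divide)
    have "partial_sum N x = (\<Sum>j. partial_sum N (z j))"
      using sums z_bound sums_summable[OF g_sums] by (rule partial_sum_suminf)
    also have "norm \<dots> \<le> (\<Sum>j. g j)"
      using z_bound sums_summable[OF g_sums] by (rule norm_suminf_le)
    finally show ?thesis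
      using sums_unique[OF g_sums] by simp
  qed
  show ?thesis
  proof (rule that)
    show "2 * M + 1 > 0"
      using \<open>M \<ge> 0\<close> by simp
    fix N x
    have "norm (partial_sum N x) \<le> 2 * M * norm x"
      by (rule bound)
    also have "\<dots> \<le> (2 * M + 1) * norm x"
      by (simp add: mult_right_mono)
    finally show "norm (partial_sum N x) \<le> (2 * M + 1) * norm x" .
  qed
qed

lemma basis_vectors_separated:
  assumes "c > 0" and "\<And>n. c \<le> norm (e n)"
  obtains \<delta> where "\<delta> > 0" and "\<And>i j. i \<noteq> j \<Longrightarrow> \<delta> \<le> norm (e i - e j)"
proof -
  obtain K where "K > 0" and K: "\<And>N x. norm (partial_sum N x) \<le> K * norm x"
    using partial_sum_uniformly_bounded by blast
  have "c / (2 * K) \<le> norm (e i - e j)" if "i \<noteq> j" for i j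
  proof -
    have "coeff i (e i - e j) = 1"
      using that by (simp add: linear_diff[OF linear_coeff] coeff_basis)
    then have "norm (e i) \<le> 2 * (K * norm (e i - e j))"
      using norm_coeff_scaleR_le[of "e i - e j" "K * norm (e i - e j)" i, OF K] by simp
    then show ?thesis
      using assms(2)[of i] \<open>K > 0\<close> by (simp add: field_simps)
  qed
  then show ?thesis
    using that[of "c / (2 * K)"] \<open>c > 0\<close> \<open>K > 0\<close> by simp
qed

section \<open>Reindexing operators\<close>

definition reindexed_partial_sum :: "(nat \<Rightarrow> nat) \<Rightarrow> nat \<Rightarrow> 'a \<Rightarrow> 'a" where
  "reindexed_partial_sum k N x = (\<Sum>n<N. coeff n x *\<^sub>R e (k n))"

definition reindex :: "(nat \<Rightarrow> nat) \<Rightarrow> 'a \<Rightarrow> 'a" where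
  "reindex k x = lim (\<lambda>N. reindexed_partial_sum k N x)"

lemma linear_reindexed_partial_sum: "linear (reindexed_partial_sum k N)"
  unfolding reindexed_partial_sum_def
  by (intro linear_compose_sum ballI linear_compose[OF linear_coeff linear_scaleR_left, unfolded o_def])

lemma reindexed_partial_sum_dominated:
  assumes "dominates e (e \<circ> k)"
  obtains C where "C > 0" and "\<And>M N x. norm (reindexed_partial_sum k N x - reindexed_partial_sum k M x)
    \<le> C * norm (partial_sum N x - partial_sum M x)"
proof -
  obtain C where "C > 0"
    and C: "\<And>A a. finite A \<Longrightarrow> norm (\<Sum>n\<in>A. a n *\<^sub>R e (k n)) \<le> C * norm (\<Sum>n\<in>A. a n *\<^sub>R e n)"
    using dominates_finite_sums[OF assms] by auto
  have le: "norm (reindexed_partial_sum k N x - reindexed_partial_sum k M x)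
    \<le> C * norm (partial_sum N x - partial_sum M x)" if "M \<le> N" for M N x
    using C[of "{M..<N}" "\<lambda>n. coeff n x"] that
    by (simp add: reindexed_partial_sum_def partial_sum_def sum_lessThan_diff)
  have "norm (reindexed_partial_sum k N x - reindexed_partial_sum k M x)
    \<le> C * norm (partial_sum N x - partial_sum M x)" for M N x
  proof (cases "M \<le> N")
    case True
    then show ?thesis by (rule le)
  next
    case False
    then have "norm (reindexed_partial_sum k M x - reindexed_partial_sum k N x)
      \<le> C * norm (partial_sum M x - partial_sum N x)"
      by (intro le) simp
    then show ?thesis
      by (simp only: norm_minus_commute)
  qed
  with \<open>C > 0\<close> show ?thesis
    using that by blast
qed

lemma reindexed_partial_sum_tendsto:
  assumes "dominates e (e \<circ> k)"
  shows "(\<lambda>N. reindexed_partial_sum k N x) \<longlonglongrightarrow> reindex k x"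
proof -
  obtain C where "C > 0" and C: "\<And>M N. norm (reindexed_partial_sum k N x - reindexed_partial_sum k M x)
    \<le> C * norm (partial_sum N x - partial_sum M x)"
    using reindexed_partial_sum_dominated[OF assms] by metis
  have "Cauchy (\<lambda>N. reindexed_partial_sum k N x)"
    using LIMSEQ_imp_Cauchy[OF partial_sum_tendsto] C \<open>C > 0\<close> by (rule Cauchy_dominated)
  then show ?thesis
    unfolding reindex_def by (simp add: Cauchy_convergent_iff convergent_LIMSEQ_iff)
qed

lemma bounded_linear_reindex:
  assumes "dominates e (e \<circ> k)"
  shows "bounded_linear (reindex k)"
proof -
  note tendsto = reindexed_partial_sum_tendsto[OF assms]
  obtain C where C: "\<And>N x. norm (reindexed_partial_sum k N x - reindexed_partial_sum k 0 x)
    \<le> C * norm (partial_sum N x - partial_sum 0 x)"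
    using reindexed_partial_sum_dominated[OF assms] by metis
  show ?thesis
  proof (rule bounded_linear_intro)
    fix x y
    have "(\<lambda>N. reindexed_partial_sum k N (x + y)) \<longlonglongrightarrow> reindex k x + reindex k y"
      using tendsto_add[OF tendsto[of x] tendsto[of y]]
      by (simp add: linear_add[OF linear_reindexed_partial_sum])
    then show "reindex k (x + y) = reindex k x + reindex k y"
      using tendsto LIMSEQ_unique by blast
  next
    fix t x
    have "(\<lambda>N. reindexed_partial_sum k N (t *\<^sub>R x)) \<longlonglongrightarrow> t *\<^sub>R reindex k x"
      using tendsto_scaleR[OF tendsto_const tendsto[of x]]
      by (simp add: linear_scale[OF linear_reindexed_partial_sum])
    then show "reindex k (t *\<^sub>R x) = t *\<^sub>R reindex k x"
      using tendsto LIMSEQ_unique by blast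
  next
    fix x
    have "norm (reindex k x) \<le> C * norm x"
    proof (rule tendsto_le[OF trivial_limit_sequentially])
      show "(\<lambda>N. norm (reindexed_partial_sum k N x)) \<longlonglongrightarrow> norm (reindex k x)"
        by (intro tendsto_norm tendsto)
      show "(\<lambda>N. C * norm (partial_sum N x)) \<longlonglongrightarrow> C * norm x"
        by (intro tendsto_mult tendsto_const tendsto_norm partial_sum_tendsto)
      show "\<forall>\<^sub>F N in sequentially. norm (reindexed_partial_sum k N x) \<le> C * norm (partial_sum N x)"
        using C by (simp add: reindexed_partial_sum_def partial_sum_def)
    qed
    then show "norm (reindex k x) \<le> norm x * C"
      by (simp add: mult.commute)
  qed
qed

lemma reindex_basis:
  assumes "dominates e (e \<circ> k)"
  shows "reindex k (e m) = e (k m)"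
proof -
  have "\<forall>\<^sub>F N in sequentially. reindexed_partial_sum k N (e m) = e (k m)"
    using eventually_gt_at_top[of m]
    by eventually_elim (simp add: reindexed_partial_sum_def coeff_basis)
  then have "(\<lambda>N. reindexed_partial_sum k N (e m)) \<longlonglongrightarrow> e (k m)"
    by (rule tendsto_eventually)
  then show ?thesis
    using reindexed_partial_sum_tendsto[OF assms] LIMSEQ_unique by blast
qed

lemma norm_reindex_diff_basis_le:
  assumes "dominates e (e \<circ> k)" and "dominates e (e \<circ> k')"
  shows "norm (e (k m) - e (k' m)) \<le> norm (Blinfun (reindex k) - Blinfun (reindex k')) * norm (e m)"
proof -
  have "e (k m) - e (k' m) = blinfun_apply (Blinfun (reindex k) - Blinfun (reindex k')) (e m)"
    using assms by (simp add: blinfun.diff_left bounded_linear_Blinfun_apply bounded_linear_reindex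
        reindex_basis)
  then show ?thesis
    by (simp add: norm_blinfun)
qed

lemma reindex_set_subsequence_separated:
  assumes "seminormalized e" and dom: "\<And>k. strict_mono k \<Longrightarrow> dominates e (e \<circ> k)"
  obtains \<delta> where "\<delta> > 0" and "\<And>A A'. A \<noteq> A' \<Longrightarrow>
    \<delta> \<le> dist (Blinfun (reindex (set_subsequence A))) (Blinfun (reindex (set_subsequence A')))"
proof -
  obtain c B where "c > 0" and lower: "\<And>n. c \<le> norm (e n)" and upper: "\<And>n. norm (e n) \<le> B"
    using assms(1) unfolding seminormalized_def by blast
  then have "B > 0"
    using lower[of 0] upper[of 0] by linarith
  obtain \<delta> where "\<delta> > 0" and \<delta>: "\<And>i j. i \<noteq> j \<Longrightarrow> \<delta> \<le> norm (e i - e j)"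
    using basis_vectors_separated[OF \<open>c > 0\<close> lower] by blast
  note dom_set = dom[OF strict_mono_set_subsequence]
  have "\<delta> / B \<le> dist (Blinfun (reindex (set_subsequence A))) (Blinfun (reindex (set_subsequence A')))"
    if "A \<noteq> A'" for A A'
  proof -
    obtain m where "set_subsequence A m \<noteq> set_subsequence A' m"
      using set_subsequence_differ[OF \<open>A \<noteq> A'\<close>] by blast
    then have "\<delta> \<le> norm (e (set_subsequence A m) - e (set_subsequence A' m))"
      by (rule \<delta>)
    also have "\<dots> \<le> dist (Blinfun (reindex (set_subsequence A))) (Blinfun (reindex (set_subsequence A')))
        * norm (e m)"
      unfolding dist_norm by (rule norm_reindex_diff_basis_le[OF dom_set dom_set])
    also have "\<dots> \<le> dist (Blinfun (reindex (set_subsequence A))) (Blinfun (reindex (set_subsequence A'))) * B"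
      by (intro mult_left_mono upper) simp
    finally show ?thesis
      using \<open>B > 0\<close> by (simp add: field_simps)
  qed
  moreover have "\<delta> / B > 0"
    using \<open>\<delta> > 0\<close> \<open>B > 0\<close> by simp
  ultimately show ?thesis
    using that by blast
qed

end

lemma uncountable_UNIV_nat_set: "uncountable (UNIV :: nat set set)"
proof
  assume "countable (UNIV :: nat set set)"
  then have "range (from_nat_into (UNIV :: nat set set)) = Pow UNIV"
    by (simp add: range_from_nat_into)
  then show False
    using Cantors_theorem by blast
qed

lemma separated_family_not_separable:
  fixes f :: "'i \<Rightarrow> 'a::metric_space"
  assumes "uncountable (UNIV :: 'i set)" and "\<delta> > 0"
    and separated: "\<And>i j. i \<noteq> j \<Longrightarrow> \<delta> \<le> dist (f i) (f j)"
  shows "\<not> separable_space (euclidean :: 'a topology)"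
proof
  assume "separable_space (euclidean :: 'a topology)"
  then obtain C :: "'a set" where "countable C" and "closure C = UNIV"
    unfolding separable_space_def by auto
  then have "\<exists>c\<in>C. dist c (f i) < \<delta> / 2" for i
    by (intro closure_approachable[THEN iffD1, rule_format]) (simp_all add: \<open>\<delta> > 0\<close>)
  then obtain c where c: "\<And>i. c i \<in> C" and close: "\<And>i. dist (c i) (f i) < \<delta> / 2"
    by metis
  have "inj c"
  proof (rule injI, rule ccontr)
    fix i j assume "c i = c j" "i \<noteq> j"
    then have "dist (f i) (f j) \<le> dist (c i) (f i) + dist (c j) (f j)"
      using dist_triangle[of "f i" "f j" "c i"] by (simp add: dist_commute)
    then have "dist (f i) (f j) < \<delta>"
      using close[of i] close[of j] by linarith
    with separated[OF \<open>i \<noteq> j\<close>] show False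
      by simp
  qed
  moreover have "countable (range c)"
    using c \<open>countable C\<close> by (meson countable_subset image_subsetI)
  ultimately show False
    using assms(1) countable_image_inj_on by blast
qed

theorem proposition2p3:
  fixes e :: "nat \<Rightarrow> 'a::banach"
  assumes "schauder_basis e"
    and "seminormalized e"
    and "\<And>k. strict_mono k \<Longrightarrow> dominates e (e \<circ> k)"
  shows "\<not> separable_space (euclidean :: ('a \<Rightarrow>\<^sub>L 'a) topology)"
proof -
  interpret basis_expansion e
    using assms(1) by unfold_locales
  obtain \<delta> where "\<delta> > 0" and "\<And>A A'. A \<noteq> A' \<Longrightarrow>
    \<delta> \<le> dist (Blinfun (reindex (set_subsequence A))) (Blinfun (reindex (set_subsequence A')))"
    using reindex_set_subsequence_separated[OF assms(2,3)] by blast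
  then show ?thesis
    by (rule separated_family_not_separable[OF uncountable_UNIV_nat_set])
qed

end
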